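(* Let $\mathfrak g_0$ be a proper (continuous or sequential) contraction of the real $n$-dimensional Lie algebra $\mathfrak g$. Then $\mathrm{rank}_+\kappa_{\mathfrak g_0}\le\mathrm{rank}_+\kappa_{\mathfrak g}$ and $\mathrm{rank}_-\kappa_{\mathfrak g_0}\le\mathrm{rank}_-\kappa_{\mathfrak g}$. Moreover, for every $\alpha\in\mathbb R$, $\mathrm{rank}_+\tilde\kappa^\alpha_{\mathfrak g_0}\le\mathrm{rank}_+\tilde\kappa^\alpha_{\mathfrak g}$ and $\mathrm{rank}_-\tilde\kappa^\alpha_{\mathfrak g_0}\le\mathrm{rank}_-\tilde\kappa^\alpha_{\mathfrak g}$.
   Context: Let $V$ be an $n$-dimensional real vector space and $\mathfrak g=(V,[\cdot,\cdot])$ a Lie algebra. Continuous contraction: for a continuous map $U:(0,1]\to GL(V)$, $\varepsilon\mapsto U_\varepsilon$, put $[x,y]_\varepsilon=U_\varepsilon^{-1}[U_\varepsilon x,U_\varepsilon y]$; if $[x,y]_0:=\lim_{\varepsilon\to0^+}[x,y]_\varepsilon$ exists for all $x,y\in V$, the Lie algebra $\mathfrak g_0=(V,[\cdot,\cdot]_0)$ is called a (one-parametric continuous) contraction of $\mathfrak g$. Sequential contraction: the same with a sequence $U_p\in GL(V)$ and $p\to\infty$. A contraction is proper if $\mathfrak g_0\not\cong\mathfrak g$. The Killing form is $\kappa_{\mathfrak g}(u,v)=\mathrm{tr}(\mathrm{ad}_u\mathrm{ad}_v)$ and the modified Killing form is $\tilde\kappa^\alpha_{\mathfrak g}(u,v)=\mathrm{tr}(\mathrm{ad}_u\mathrm{ad}_v)+\alpha\,\mathrm{tr}(\mathrm{ad}_u)\mathrm{tr}(\mathrm{ad}_v)$.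 For a real symmetric bilinear form, $\mathrm{rank}_+$ (resp. $\mathrm{rank}_-$) is the number of positive (resp. negative) entries in a diagonal form (Sylvester inertia). *)

theory Defs
  imports "HOL-Analysis.Analysis"
begin

definition lie_bracket :: "(real^'n \<Rightarrow> real^'n \<Rightarrow> real^'n) \<Rightarrow> bool" where
  "lie_bracket b \<longleftrightarrow> bilinear b \<and> (\<forall>x. b x x = 0) \<and>
     (\<forall>x y z. b x (b y z) + b y (b z x) + b z (b x y) = 0)"

definition lie_isomorphic ::
  "(real^'n \<Rightarrow> real^'n \<Rightarrow> real^'n) \<Rightarrow> (real^'n \<Rightarrow> real^'n \<Rightarrow> real^'n) \<Rightarrow> bool" where
  "lie_isomorphic b c \<longleftrightarrow> (\<exists>f. linear f \<and> bij f \<and> (\<forall>x y. f (b x y) = c (f x) (f y)))"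

definition continuous_contraction ::
  "(real^'n \<Rightarrow> real^'n \<Rightarrow> real^'n) \<Rightarrow> (real^'n \<Rightarrow> real^'n \<Rightarrow> real^'n) \<Rightarrow> bool" where
  "continuous_contraction b b0 \<longleftrightarrow>
     (\<exists>U :: real \<Rightarrow> real^'n^'n. continuous_on {0<..1} U \<and>
        (\<forall>\<epsilon>\<in>{0<..1}. invertible (U \<epsilon>)) \<and>
        (\<forall>x y. ((\<lambda>\<epsilon>. matrix_inv (U \<epsilon>) *v b (U \<epsilon> *v x) (U \<epsilon> *v y)) \<longlongrightarrow> b0 x y) (at_right 0)))"

definition sequential_contraction ::
  "(real^'n \<Rightarrow> real^'n \<Rightarrow> real^'n) \<Rightarrow> (real^'n \<Rightarrow> real^'n \<Rightarrow> real^'n) \<Rightarrow> bool" where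
  "sequential_contraction b b0 \<longleftrightarrow>
     (\<exists>U :: nat \<Rightarrow> real^'n^'n. (\<forall>p. invertible (U p)) \<and>
        (\<forall>x y. (\<lambda>p. matrix_inv (U p) *v b (U p *v x) (U p *v y)) \<longlonglongrightarrow> b0 x y))"

definition ad :: "(real^'n \<Rightarrow> real^'n \<Rightarrow> real^'n) \<Rightarrow> real^'n \<Rightarrow> real^'n^'n" where
  "ad b u = matrix (b u)"

definition killing :: "(real^'n \<Rightarrow> real^'n \<Rightarrow> real^'n) \<Rightarrow> real^'n \<Rightarrow> real^'n \<Rightarrow> real" where
  "killing b u v = trace (ad b u ** ad b v)"

definition mod_killing ::
  "real \<Rightarrow> (real^'n \<Rightarrow> real^'n \<Rightarrow> real^'n) \<Rightarrow> real^'n \<Rightarrow> real^'n \<Rightarrow> real" where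
  "mod_killing \<alpha> b u v = trace (ad b u ** ad b v) + \<alpha> * trace (ad b u) * trace (ad b v)"

text \<open>Well defined by Sylvester's law of inertia.\<close>
definition diag_basis :: "(real^'n \<Rightarrow> real^'n \<Rightarrow> real) \<Rightarrow> real^'n^'n \<Rightarrow> bool" where
  "diag_basis B P \<longleftrightarrow> invertible P \<and>
     (\<forall>i j. i \<noteq> j \<longrightarrow> B (column i P) (column j P) = 0)"

definition rank_plus :: "(real^'n \<Rightarrow> real^'n \<Rightarrow> real) \<Rightarrow> nat" where
  "rank_plus B = (THE k. \<exists>P. diag_basis B P \<and> k = card {i. B (column i P) (column i P) > 0})"

definition rank_minus :: "(real^'n \<Rightarrow> real^'n \<Rightarrow> real) \<Rightarrow> nat" where
  "rank_minus B = (THE k. \<exists>P. diag_basis B P \<and> k = card {i. B (column i P) (column i P) < 0})"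

end

theory Submission
  imports Defs
begin

(*
  rank_plus B is the largest dimension of a subspace on which B is positive definite
  (Sylvester's law of inertia, obtained from a B-orthogonal basis).

  For the brackets [x,y]_t = U_t^-1 [U_t x, U_t y], the (modified) Killing form is the
  pullback of that of g along the injective map U_t, so every subspace on which it is
  positive definite is carried by U_t to one for the form of g. These forms converge
  pointwise to the form of g_0, and a subspace on which the limit is positive definite
  is, by compactness of its unit sphere, positive definite for all forms close enough
  to the limit. Hence rank_plus can only drop in the limit; rank_minus is rank_plus of
  the negated form.
*)

section \<open>Sylvester's law of inertia\<close>

definition positive_definite_on :: "('a::real_vector \<Rightarrow> 'a \<Rightarrow> real) \<Rightarrow> 'a set \<Rightarrow> bool" where
  "positive_definite_on B W \<longleftrightarrow> (\<forall>v\<in>W. v \<noteq> 0 \<longrightarrow> 0 < B v v)"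

lemma exists_orthogonal_basis:
  fixes B :: "'a::euclidean_space \<Rightarrow> 'a \<Rightarrow> real"
  assumes bl: "bilinear B" and sym: "\<And>x y. B x y = B y x" and "subspace S"
  shows "\<exists>T. T \<subseteq> S \<and> independent T \<and> S \<subseteq> span T \<and> pairwise (\<lambda>u w. B u w = 0) T"
  using \<open>subspace S\<close>
proof (induction "dim S" arbitrary: S rule: less_induct)
  case less
  show ?case
  proof (cases "\<forall>v\<in>S. B v v = 0")
    case True
    have "B u w = 0" if "u \<in> S" "w \<in> S" for u w
    proof -
      have "B (u + w) (u + w) = B u u + 2 * B u w + B w w"
        by (simp add: bilinear_ladd bilinear_radd bl sym[of w u])
      moreover have "u + w \<in> S" using less.prems that subspace_add by blast
      ultimately show ?thesis using True that by simp
    qed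
    moreover obtain T where "T \<subseteq> S" "independent T" "S \<subseteq> span T"
      by (rule basis_exists[of S])
    ultimately show ?thesis by (auto simp: pairwise_def)
  next
    case False
    then obtain v where v: "v \<in> S" "B v v \<noteq> 0" by auto
    define S' where "S' = {w\<in>S. B v w = 0}"
    have sub': "subspace S'"
      using less.prems bl unfolding S'_def subspace_def
      by (simp add: bilinear_rzero bilinear_radd bilinear_rmul)
    have "S' \<subset> S" using v unfolding S'_def by auto
    moreover have span_S': "span S' = S'" and "span S = S" using sub' less.prems by simp_all
    ultimately have "dim S' < dim S" by (metis dim_psubset)
    then obtain T' where T': "T' \<subseteq> S'" "independent T'" "S' \<subseteq> span T'"
        "pairwise (\<lambda>u w. B u w = 0) T'"
      using less.hyps sub' by blast
    have span_T': "span T' = S'"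
      using T'(3) span_mono[OF T'(1)] span_S' by blast
    have "S \<subseteq> span (insert v T')"
    proof
      fix w assume w: "w \<in> S"
      define c where "c = B v w / B v v"
      have "w - c *\<^sub>R v \<in> S'"
        using w v less.prems
        by (simp add: S'_def c_def subspace_diff subspace_scale bilinear_rsub bilinear_rmul bl)
      then have "w - c *\<^sub>R v \<in> span (insert v T')"
        using span_T' span_mono[of T' "insert v T'"] by blast
      then show "w \<in> span (insert v T')"
        by (metis diff_add_cancel span_add span_base span_mul insertI1)
    qed
    moreover have "independent (insert v T')"
      using independent_insertI[of v T'] span_T' T'(2) v unfolding S'_def by auto
    moreover have "pairwise (\<lambda>u w. B u w = 0) (insert v T')"
      using T'(1,4) sym unfolding S'_def pairwise_insert by auto
    moreover have "insert v T' \<subseteq> S" using T'(1) v unfolding S'_def by auto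
    ultimately show ?thesis by blast
  qed
qed

lemma diag_basis_exists:
  fixes B :: "real^'n \<Rightarrow> real^'n \<Rightarrow> real"
  assumes bl: "bilinear B" and sym: "\<And>x y. B x y = B y x"
  shows "\<exists>P. diag_basis B P"
proof -
  obtain T where T: "independent T" "UNIV \<subseteq> span T" "pairwise (\<lambda>u w. B u w = 0) T"
    using exists_orthogonal_basis[OF bl sym subspace_UNIV] by blast
  have "finite T" using T(1) by (rule finiteI_independent)
  moreover have "card T = CARD('n)"
    using basis_card_eq_dim[of T UNIV] T by auto
  ultimately obtain g where g: "bij_betw g (UNIV::'n set) T"
    using finite_same_card_bij[of "UNIV::'n set" T] by auto
  define P :: "real^'n^'n" where "P = (\<chi> i j. g j $ i)"
  have col: "column j P = g j" for j by (simp add: P_def column_def vec_eq_iff)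
  have "x = 0" if "P *v x = 0" for x
  proof -
    define u where "u t = x $ inv_into UNIV g t" for t
    have "(\<Sum>t\<in>T. u t *\<^sub>R t) = (\<Sum>i\<in>UNIV. u (g i) *\<^sub>R g i)"
      using sum.reindex_bij_betw[OF g, of "\<lambda>t. u t *\<^sub>R t"] by simp
    also have "\<dots> = P *v x"
      using g by (simp add: u_def bij_betw_def matrix_mult_sum scalar_mult_eq_scaleR col)
    finally have "\<forall>t\<in>T. u t = 0"
      using that T(1) dependent_finite[OF \<open>finite T\<close>] by auto
    then have "x $ i = 0" for i
      using g by (metis u_def bij_betw_def inv_into_f_f UNIV_I bij_betwE)
    then show ?thesis by (simp add: vec_eq_iff)
  qed
  then have "invertible P"
    using matrix_left_invertible_ker[of P] invertible_left_inverse[of P] by blast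
  moreover have "B (column i P) (column j P) = 0" if "i \<noteq> j" for i j
    using T(3) g that by (auto simp: col pairwise_def bij_betw_def inj_eq)
  ultimately show ?thesis unfolding diag_basis_def by blast
qed

lemma quadratic_form_diag_basis:
  fixes B :: "real^'n \<Rightarrow> real^'n \<Rightarrow> real"
  assumes bl: "bilinear B" and P: "diag_basis B P"
  shows "B (P *v x) (P *v x) = (\<Sum>i\<in>UNIV. (x$i)^2 * B (column i P) (column i P))"
proof -
  have "P *v x = (\<Sum>i\<in>UNIV. (x$i) *\<^sub>R column i P)"
    by (simp add: matrix_mult_sum scalar_mult_eq_scaleR)
  then have "B (P *v x) (P *v x)
      = (\<Sum>i\<in>UNIV. \<Sum>j\<in>UNIV. B ((x$i) *\<^sub>R column i P) ((x$j) *\<^sub>R column j P))"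
    by (simp add: bilinear_sum[OF bl] sum.cartesian_product)
  also have "\<dots> = (\<Sum>i\<in>UNIV. \<Sum>j\<in>UNIV. if j = i then (x$i)^2 * B (column i P) (column i P) else 0)"
    using P bl by (intro sum.cong refl)
      (auto simp: diag_basis_def bilinear_lmul bilinear_rmul power2_eq_square)
  finally show ?thesis by simp
qed

lemma coordinate_subspace_image:
  fixes P :: "real^'n^'n"
  assumes "invertible P"
  shows "subspace ((*v) P ` {x. \<forall>i. i \<notin> I \<longrightarrow> x$i = 0})"
    and "dim ((*v) P ` {x. \<forall>i. i \<notin> I \<longrightarrow> x$i = 0}) = card I"
proof -
  have sub: "subspace {x::real^'n. \<forall>i. i \<notin> I \<longrightarrow> x$i = 0}"
    by (auto simp: subspace_def)
  then show "subspace ((*v) P ` {x. \<forall>i. i \<notin> I \<longrightarrow> x$i = 0})"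
    by (rule linear_subspace_image[rotated]) simp
  have "dim ((*v) P ` {x. \<forall>i. i \<notin> I \<longrightarrow> x$i = 0}) = dim {x::real^'n. \<forall>i. i \<notin> I \<longrightarrow> x$i = 0}"
    using inj_matrix_vector_mult[OF assms] by (intro dim_image_eq) (auto simp: inj_on_def)
  also have "\<dots> = card I"
    using dim_substandard_cart[of I, where 'a=real] by (simp add: dim_vec_eq)
  finally show "dim ((*v) P ` {x. \<forall>i. i \<notin> I \<longrightarrow> x$i = 0}) = card I" .
qed

lemma dim_add_le_of_positive_nonpositive:
  fixes B :: "real^'n \<Rightarrow> real^'n \<Rightarrow> real"
  assumes "subspace W" "subspace N" "positive_definite_on B W" "\<And>v. v \<in> N \<Longrightarrow> B v v \<le> 0"
  shows "dim W + dim N \<le> CARD('n)"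
proof -
  have "W \<inter> N \<subseteq> {0}"
    using assms(3,4) by (force simp: positive_definite_on_def)
  then have "dim (W \<inter> N) = 0" by (simp add: dim_eq_0)
  moreover have "dim {x + y |x y. x \<in> W \<and> y \<in> N} \<le> CARD('n)"
    using dim_subset_UNIV[of "{x + y |x y. x \<in> W \<and> y \<in> N}"] by simp
  ultimately show ?thesis using dim_sums_Int[OF assms(1,2)] by linarith
qed

lemma dim_le_card_positive_diagonal:
  fixes B :: "real^'n \<Rightarrow> real^'n \<Rightarrow> real"
  assumes bl: "bilinear B" and P: "diag_basis B P"
    and W: "subspace W" "positive_definite_on B W"
  shows "dim W \<le> card {i. 0 < B (column i P) (column i P)}"
proof -
  let ?I = "{i. 0 < B (column i P) (column i P)}"
  let ?N = "(*v) P ` {x. \<forall>i. i \<notin> - ?I \<longrightarrow> x$i = 0}"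
  have inv: "invertible P" using P by (simp add: diag_basis_def)
  have nonpos: "B v v \<le> 0" if "v \<in> ?N" for v
  proof -
    obtain x where x: "v = P *v x" "\<forall>i\<in>?I. x$i = 0" using \<open>v \<in> ?N\<close> by auto
    have "B v v = (\<Sum>i\<in>UNIV. (x$i)^2 * B (column i P) (column i P))"
      using quadratic_form_diag_basis[OF bl P] x(1) by simp
    also have "\<dots> \<le> 0"
    proof (rule sum_nonpos)
      fix i show "(x$i)^2 * B (column i P) (column i P) \<le> 0"
        using x(2) by (cases "i \<in> ?I") (auto intro: mult_nonneg_nonpos)
    qed
    finally show ?thesis .
  qed
  have "dim W + dim ?N \<le> CARD('n)"
    by (rule dim_add_le_of_positive_nonpositive[OF W(1) coordinate_subspace_image(1)[OF inv] W(2) nonpos])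
  then have "dim W + card (- ?I) \<le> CARD('n)"
    by (simp only: coordinate_subspace_image(2)[OF inv])
  moreover have "card (- ?I) = CARD('n) - card ?I"
    by (simp add: Compl_eq_Diff_UNIV card_Diff_subset)
  moreover have "card ?I \<le> CARD('n)" by (simp add: card_mono)
  ultimately show ?thesis by linarith
qed

lemma exists_positive_subspace_diagonal:
  fixes B :: "real^'n \<Rightarrow> real^'n \<Rightarrow> real"
  assumes bl: "bilinear B" and P: "diag_basis B P"
  shows "\<exists>W. subspace W \<and> dim W = card {i. 0 < B (column i P) (column i P)} \<and> positive_definite_on B W"
proof -
  let ?I = "{i. 0 < B (column i P) (column i P)}"
  let ?W = "(*v) P ` {x. \<forall>i. i \<notin> ?I \<longrightarrow> x$i = 0}"
  have inv: "invertible P" using P by (simp add: diag_basis_def)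
  have "0 < B v v" if "v \<in> ?W" "v \<noteq> 0" for v
  proof -
    obtain x where x: "v = P *v x" "\<forall>i. i \<notin> ?I \<longrightarrow> x$i = 0"
      using \<open>v \<in> ?W\<close> by blast
    have "x \<noteq> 0" using x(1) \<open>v \<noteq> 0\<close> by auto
    then obtain k where k: "x$k \<noteq> 0" by (auto simp: vec_eq_iff)
    then have pos_k: "0 < (x$k)^2 * B (column k P) (column k P)"
      using x(2) by force
    have nonneg: "0 \<le> (x$i)^2 * B (column i P) (column i P)" for i
      using x(2) by (cases "i \<in> ?I") auto
    have "0 < (\<Sum>i\<in>UNIV. (x$i)^2 * B (column i P) (column i P))"
      using pos_k nonneg by (intro sum_pos2[where i=k]) auto
    then show ?thesis
      using quadratic_form_diag_basis[OF bl P] x(1) by simp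
  qed
  then show ?thesis
    using coordinate_subspace_image[OF inv, of ?I] unfolding positive_definite_on_def by blast
qed

lemma rank_plus_diag_basis:
  fixes B :: "real^'n \<Rightarrow> real^'n \<Rightarrow> real"
  assumes bl: "bilinear B" and P: "diag_basis B P"
  shows "rank_plus B = card {i. 0 < B (column i P) (column i P)}"
  unfolding rank_plus_def
proof (rule the_equality)
  fix k assume "\<exists>Q. diag_basis B Q \<and> k = card {i. 0 < B (column i Q) (column i Q)}"
  then obtain Q where Q: "diag_basis B Q" "k = card {i. 0 < B (column i Q) (column i Q)}"
    by blast
  obtain W where W: "subspace W" "dim W = card {i. 0 < B (column i P) (column i P)}"
      "positive_definite_on B W"
    using exists_positive_subspace_diagonal[OF bl P] by blast
  obtain W' where W': "subspace W'" "dim W' = k" "positive_definite_on B W'"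
    using exists_positive_subspace_diagonal[OF bl Q(1)] Q(2) by blast
  show "k = card {i. 0 < B (column i P) (column i P)}"
    using dim_le_card_positive_diagonal[OF bl P W'(1,3)] dim_le_card_positive_diagonal[OF bl Q(1) W(1,3)]
      W(2) W'(2) Q(2) by linarith
qed (use P in blast)

lemma dim_le_rank_plus:
  fixes B :: "real^'n \<Rightarrow> real^'n \<Rightarrow> real"
  assumes bl: "bilinear B" and sym: "\<And>x y. B x y = B y x"
    and "subspace W" "positive_definite_on B W"
  shows "dim W \<le> rank_plus B"
proof -
  obtain P where P: "diag_basis B P" using diag_basis_exists[OF bl sym] by blast
  show ?thesis
    unfolding rank_plus_diag_basis[OF bl P] by (rule dim_le_card_positive_diagonal[OF bl P assms(3,4)])
qed

lemma exists_positive_subspace_rank_plus: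
  fixes B :: "real^'n \<Rightarrow> real^'n \<Rightarrow> real"
  assumes bl: "bilinear B" and sym: "\<And>x y. B x y = B y x"
  shows "\<exists>W. subspace W \<and> dim W = rank_plus B \<and> positive_definite_on B W"
proof -
  obtain P where P: "diag_basis B P" using diag_basis_exists[OF bl sym] by blast
  show ?thesis
    unfolding rank_plus_diag_basis[OF bl P] by (rule exists_positive_subspace_diagonal[OF bl P])
qed

lemma rank_minus_eq_rank_plus_uminus: "rank_minus B = rank_plus (\<lambda>x y. - B x y)"
  unfolding rank_minus_def rank_plus_def diag_basis_def by simp

section \<open>Lower semicontinuity of the positive index\<close>

lemma bilinear_eq_sum_Basis:
  fixes D :: "'a::euclidean_space \<Rightarrow> 'a \<Rightarrow> real"
  assumes bl: "bilinear D"
  shows "D v w = (\<Sum>i\<in>Basis. \<Sum>j\<in>Basis. (v \<bullet> i) * (w \<bullet> j) * D i j)"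
proof -
  have "D v w = D (\<Sum>i\<in>Basis. (v \<bullet> i) *\<^sub>R i) (\<Sum>j\<in>Basis. (w \<bullet> j) *\<^sub>R j)"
    by (simp add: euclidean_representation)
  also have "\<dots> = (\<Sum>i\<in>Basis. \<Sum>j\<in>Basis. D ((v \<bullet> i) *\<^sub>R i) ((w \<bullet> j) *\<^sub>R j))"
    by (simp add: bilinear_sum[OF bl] sum.cartesian_product)
  also have "\<dots> = (\<Sum>i\<in>Basis. \<Sum>j\<in>Basis. (v \<bullet> i) * (w \<bullet> j) * D i j)"
    by (simp add: bilinear_lmul[OF bl] bilinear_rmul[OF bl] mult_ac)
  finally show ?thesis .
qed

lemma abs_quadratic_sum_Basis_le:
  fixes v :: "'a::euclidean_space"
  shows "\<bar>\<Sum>i\<in>Basis. \<Sum>j\<in>Basis. (v \<bullet> i) * (v \<bullet> j) * d i j\<bar>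
    \<le> (norm v)^2 * (\<Sum>i\<in>Basis. \<Sum>j\<in>Basis. \<bar>d i j\<bar>)"
proof -
  have "\<bar>\<Sum>i\<in>Basis. \<Sum>j\<in>Basis. (v \<bullet> i) * (v \<bullet> j) * d i j\<bar>
      \<le> (\<Sum>i\<in>Basis. \<Sum>j\<in>Basis. \<bar>(v \<bullet> i) * (v \<bullet> j) * d i j\<bar>)"
    by (rule order_trans[OF sum_abs sum_mono[OF sum_abs]])
  also have "\<dots> \<le> (\<Sum>i\<in>Basis. \<Sum>j\<in>Basis. (norm v)^2 * \<bar>d i j\<bar>)"
  proof (intro sum_mono)
    fix i j :: 'a assume "i \<in> Basis" "j \<in> Basis"
    then have "\<bar>v \<bullet> i\<bar> * \<bar>v \<bullet> j\<bar> \<le> norm v * norm v"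
      by (intro mult_mono Basis_le_norm) auto
    then show "\<bar>(v \<bullet> i) * (v \<bullet> j) * d i j\<bar> \<le> (norm v)^2 * \<bar>d i j\<bar>"
      by (simp add: abs_mult power2_eq_square mult_right_mono)
  qed
  also have "\<dots> = (norm v)^2 * (\<Sum>i\<in>Basis. \<Sum>j\<in>Basis. \<bar>d i j\<bar>)"
    by (simp add: sum_distrib_left)
  finally show ?thesis .
qed

lemma positive_definite_on_coercive:
  fixes B :: "'a::euclidean_space \<Rightarrow> 'a \<Rightarrow> real"
  assumes bl: "bilinear B" and W: "subspace W" and pd: "positive_definite_on B W"
  shows "\<exists>c>0. \<forall>v\<in>W. c * (norm v)^2 \<le> B v v"
proof (cases "W \<subseteq> {0}")
  case True
  then show ?thesis using bilinear_lzero[OF bl] by (intro exI[of _ 1]) auto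
next
  case False
  then obtain w where w: "w \<in> W" "w \<noteq> 0" by auto
  let ?K = "W \<inter> sphere 0 1"
  have "compact ?K"
    by (rule closed_Int_compact[OF closed_subspace[OF W] compact_sphere])
  moreover have "w /\<^sub>R norm w \<in> ?K" using w W by (simp add: subspace_scale)
  moreover have "continuous_on ?K (\<lambda>v. B v v)"
    by (rule bilinear_continuous_on_compose[OF continuous_on_id continuous_on_id bl])
  ultimately obtain v0 where v0: "v0 \<in> ?K" "\<And>u. u \<in> ?K \<Longrightarrow> B v0 v0 \<le> B u u"
    using continuous_attains_inf[of ?K "\<lambda>v. B v v"] by blast
  have "B v0 v0 * (norm v)^2 \<le> B v v" if "v \<in> W" for v
  proof (cases "v = 0")
    case True
    then show ?thesis using bilinear_lzero[OF bl] by simp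
  next
    case False
    define u where "u = v /\<^sub>R norm v"
    have "u \<in> ?K" using that W False by (simp add: subspace_scale u_def)
    moreover have "B v v = (norm v)^2 * B u u"
    proof -
      have "B (norm v *\<^sub>R u) (norm v *\<^sub>R u) = (norm v)^2 * B u u"
        by (simp add: bilinear_lmul[OF bl] bilinear_rmul[OF bl] power2_eq_square)
      moreover have "norm v *\<^sub>R u = v" using False by (simp add: u_def)
      ultimately show ?thesis by simp
    qed
    ultimately show ?thesis
      using v0(2) by (metis mult.commute mult_right_mono zero_le_power2)
  qed
  moreover have "0 < B v0 v0" using v0(1) pd by (auto simp: positive_definite_on_def)
  ultimately show ?thesis by blast
qed

lemma eventually_positive_definite_on:
  fixes B0 :: "'a::euclidean_space \<Rightarrow> 'a \<Rightarrow> real"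
  assumes bl: "bilinear B0" and lim: "\<And>x y. ((\<lambda>t. C t x y) \<longlongrightarrow> B0 x y) F"
    and ev: "eventually (\<lambda>t. bilinear (C t)) F"
    and W: "subspace W" "positive_definite_on B0 W"
  shows "eventually (\<lambda>t. positive_definite_on (C t) W) F"
proof -
  obtain c where c: "0 < c" "\<And>v. v \<in> W \<Longrightarrow> c * (norm v)^2 \<le> B0 v v"
    using positive_definite_on_coercive[OF bl W] by blast
  define S where "S t = (\<Sum>i\<in>Basis. \<Sum>j\<in>Basis. \<bar>C t i j - B0 i j\<bar>)" for t
  have "(S \<longlongrightarrow> (\<Sum>i\<in>(Basis::'a set). \<Sum>j\<in>(Basis::'a set). \<bar>B0 i j - B0 i j\<bar>)) F"
    unfolding S_def by (intro tendsto_intros lim)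
  then have "eventually (\<lambda>t. S t < c) F"
    using c(1) by (simp add: order_tendstoD(2))
  with ev show ?thesis
  proof eventually_elim
    case (elim t)
    have "\<bar>C t v v - B0 v v\<bar> \<le> (norm v)^2 * S t" for v
    proof -
      have "C t v v - B0 v v = (\<Sum>i\<in>Basis. \<Sum>j\<in>Basis. (v \<bullet> i) * (v \<bullet> j) * (C t i j - B0 i j))"
        unfolding bilinear_eq_sum_Basis[OF elim(1), of v v] bilinear_eq_sum_Basis[OF bl, of v v]
        by (simp add: sum_subtractf[symmetric] right_diff_distrib)
      then show ?thesis
        using abs_quadratic_sum_Basis_le[of v] unfolding S_def by simp
    qed
    moreover have "(norm v)^2 * S t < c * (norm v)^2" if "v \<noteq> 0" for v
      using elim(2) that by simp
    ultimately show ?case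
      using c(2) unfolding positive_definite_on_def by (smt (verit))
  qed
qed

lemma bilinear_symmetric_limit:
  fixes B0 :: "'a::real_vector \<Rightarrow> 'a \<Rightarrow> real"
  assumes F: "F \<noteq> bot" and lim: "\<And>x y. ((\<lambda>t. C t x y) \<longlongrightarrow> B0 x y) F"
    and ev: "eventually (\<lambda>t. bilinear (C t)) F"
    and ev_sym: "eventually (\<lambda>t. \<forall>x y. C t x y = C t y x) F"
  shows "bilinear B0" and "B0 x y = B0 y x"
proof -
  have limit_eq: "a = b" if "((\<lambda>t. C t x y) \<longlongrightarrow> a) F" "(g \<longlongrightarrow> b) F"
      "eventually (\<lambda>t. C t x y = g t) F" for a b x y g
    using tendsto_unique[OF F tendsto_cong[OF that(3), THEN iffD1, OF that(1)] that(2)] .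
  have "B0 (x + y) z = B0 x z + B0 y z" for x y z
    by (rule limit_eq[OF lim tendsto_add[OF lim lim]]) (use ev in \<open>eventually_elim, simp add: bilinear_ladd\<close>)
  moreover have "B0 x (y + z) = B0 x y + B0 x z" for x y z
    by (rule limit_eq[OF lim tendsto_add[OF lim lim]]) (use ev in \<open>eventually_elim, simp add: bilinear_radd\<close>)
  moreover have "B0 (c *\<^sub>R x) z = c *\<^sub>R B0 x z" for c x z
    by (rule limit_eq[OF lim tendsto_scaleR[OF tendsto_const lim]])
      (use ev in \<open>eventually_elim, simp add: bilinear_lmul\<close>)
  moreover have "B0 x (c *\<^sub>R z) = c *\<^sub>R B0 x z" for c x z
    by (rule limit_eq[OF lim tendsto_scaleR[OF tendsto_const lim]])
      (use ev in \<open>eventually_elim, simp add: bilinear_rmul\<close>)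
  ultimately show "bilinear B0"
    unfolding bilinear_def linear_iff by simp
  show "B0 x y = B0 y x"
    by (rule limit_eq[OF lim lim]) (use ev_sym in \<open>eventually_elim, simp\<close>)
qed

lemma positive_definite_on_image:
  assumes "linear f" "inj f" "positive_definite_on (\<lambda>x y. B (f x) (f y)) W"
  shows "positive_definite_on B (f ` W)"
  using assms by (auto simp: positive_definite_on_def linear_0)

lemma bilinear_compose:
  assumes "bilinear B" "linear f"
  shows "bilinear (\<lambda>x y. B (f x) (f y))"
  using assms unfolding bilinear_def by (auto intro: linear_compose[unfolded o_def])

lemma bilinear_scale:
  fixes B :: "'a::real_vector \<Rightarrow> 'b::real_vector \<Rightarrow> real"
  assumes "bilinear B"
  shows "bilinear (\<lambda>x y. c * B x y)"
  using assms unfolding bilinear_def linear_iff by (simp add: algebra_simps)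

lemma rank_plus_le_of_tendsto_pullbacks:
  fixes B B0 :: "real^'n \<Rightarrow> real^'n \<Rightarrow> real"
  assumes F: "F \<noteq> bot" and bl: "bilinear B" and sym: "\<And>x y. B x y = B y x"
    and lim: "\<And>x y. ((\<lambda>t. C t x y) \<longlongrightarrow> B0 x y) F"
    and ev: "eventually (\<lambda>t. \<exists>f. linear f \<and> inj f \<and> C t = (\<lambda>x y. B (f x) (f y))) F"
  shows "rank_plus B0 \<le> rank_plus B"
proof -
  have ev_bilinear: "eventually (\<lambda>t. bilinear (C t)) F"
    using ev by eventually_elim (use bilinear_compose[OF bl] in auto)
  have "eventually (\<lambda>t. \<forall>x y. C t x y = C t y x) F"
    using ev by eventually_elim (use sym in auto)
  then have bl0: "bilinear B0" and sym0: "\<And>x y. B0 x y = B0 y x"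
    using bilinear_symmetric_limit[OF F lim ev_bilinear] by auto
  obtain W where W: "subspace W" "dim W = rank_plus B0" "positive_definite_on B0 W"
    using exists_positive_subspace_rank_plus[OF bl0 sym0] by blast
  have "eventually (\<lambda>t. positive_definite_on (C t) W) F"
    by (rule eventually_positive_definite_on[OF bl0 lim ev_bilinear W(1,3)])
  with ev obtain f where f: "linear f" "inj f" "positive_definite_on (\<lambda>x y. B (f x) (f y)) W"
    using eventually_happens'[OF F eventually_conj] by fastforce
  have "dim (f ` W) = dim W"
    using f(1,2) by (intro dim_image_eq) (auto simp: inj_on_def inj_def)
  moreover have "dim (f ` W) \<le> rank_plus B"
    using dim_le_rank_plus[OF bl sym linear_subspace_image[OF f(1) W(1)]]
      positive_definite_on_image[OF f] by blast
  ultimately show ?thesis using W(2) by simp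
qed

section \<open>Killing forms of conjugated brackets\<close>

definition conj_bracket ::
  "real^'n^'n \<Rightarrow> (real^'n \<Rightarrow> real^'n \<Rightarrow> real^'n) \<Rightarrow> real^'n \<Rightarrow> real^'n \<Rightarrow> real^'n" where
  "conj_bracket U b x y = matrix_inv U *v b (U *v x) (U *v y)"

lemma matrix_mul_matrix_inv:
  fixes U :: "real^'n^'n"
  assumes "invertible U"
  shows "U ** matrix_inv U = mat 1"
  using someI_ex[OF assms[unfolded invertible_def]] unfolding matrix_inv_def by blast

lemma ad_conj_bracket:
  assumes "bilinear b"
  shows "ad (conj_bracket U b) u = matrix_inv U ** ad b (U *v u) ** U"
proof -
  have lin: "linear (b w)" for w
    using assms unfolding bilinear_def by (simp add: eta_contract_eq)
  have "conj_bracket U b u = (*v) (matrix_inv U) \<circ> b (U *v u) \<circ> (*v) U"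
    by (simp add: fun_eq_iff conj_bracket_def)
  then show ?thesis
    unfolding ad_def using lin by (simp add: matrix_compose linear_compose)
qed

lemma mod_killing_conj_bracket:
  assumes "invertible U" "bilinear b"
  shows "mod_killing \<alpha> (conj_bracket U b) u v = mod_killing \<alpha> b (U *v u) (U *v v)"
proof -
  let ?V = "matrix_inv U"
  have inv: "U ** ?V = mat 1" by (rule matrix_mul_matrix_inv[OF assms(1)])
  then have cancel: "A ** U ** ?V = A" for A
    by (metis matrix_mul_assoc matrix_mul_rid)
  have "trace (?V ** A ** U) = trace A" for A
    using trace_mul_sym[of "?V ** A" U] by (simp add: matrix_mul_assoc inv)
  moreover have "(?V ** A ** U) ** (?V ** A' ** U) = ?V ** (A ** A') ** U" for A A'
    by (simp add: matrix_mul_assoc cancel)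
  ultimately show ?thesis
    unfolding mod_killing_def ad_conj_bracket[OF assms(2)] by simp
qed

lemma ad_nth: "ad b u $ i $ k = b u (axis k 1) $ i"
  by (simp add: ad_def matrix_def)

lemma mod_killing_eq_sum:
  "mod_killing \<alpha> b u v = (\<Sum>i\<in>UNIV. \<Sum>k\<in>UNIV. ad b u $ i $ k * ad b v $ k $ i)
     + \<alpha> * (\<Sum>i\<in>UNIV. ad b u $ i $ i) * (\<Sum>i\<in>UNIV. ad b v $ i $ i)"
  by (simp add: mod_killing_def trace_def matrix_matrix_mult_def)

lemma mod_killing_commute: "mod_killing \<alpha> b u v = mod_killing \<alpha> b v u"
  unfolding mod_killing_def trace_mul_sym[of "ad b u"] by simp

lemma bilinear_mod_killing:
  assumes "bilinear b"
  shows "bilinear (mod_killing \<alpha> b)"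
proof -
  have lin: "linear (\<lambda>u. mod_killing \<alpha> b u v)" for v
    unfolding linear_iff mod_killing_eq_sum ad_nth
    by (simp add: bilinear_ladd[OF assms] bilinear_lmul[OF assms] algebra_simps
        sum.distrib sum_distrib_left)
  moreover have "linear (mod_killing \<alpha> b u)" for u
  proof -
    have "mod_killing \<alpha> b u = (\<lambda>v. mod_killing \<alpha> b v u)"
      by (rule ext, rule mod_killing_commute)
    then show ?thesis using lin[of u] by simp
  qed
  ultimately show ?thesis
    unfolding bilinear_def by blast
qed

lemma tendsto_mod_killing:
  assumes "\<And>x y. ((\<lambda>t. c t x y) \<longlongrightarrow> b0 x y) F"
  shows "((\<lambda>t. mod_killing \<alpha> (c t) u v) \<longlongrightarrow> mod_killing \<alpha> b0 u v) F"
  unfolding mod_killing_eq_sum ad_nth by (intro tendsto_intros tendsto_vec_nth assms)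

lemma killing_eq_mod_killing_0: "killing b = mod_killing 0 b"
  by (simp add: fun_eq_iff killing_def mod_killing_def)

lemma mod_killing_ranks_le_of_tendsto_conj_bracket:
  fixes b b0 :: "real^'n \<Rightarrow> real^'n \<Rightarrow> real^'n" and U :: "'t \<Rightarrow> real^'n^'n"
  assumes F: "F \<noteq> bot" and bl: "bilinear b"
    and inv: "eventually (\<lambda>t. invertible (U t)) F"
    and lim: "\<And>x y. ((\<lambda>t. conj_bracket (U t) b x y) \<longlongrightarrow> b0 x y) F"
  shows "rank_plus (mod_killing \<alpha> b0) \<le> rank_plus (mod_killing \<alpha> b)"
    and "rank_minus (mod_killing \<alpha> b0) \<le> rank_minus (mod_killing \<alpha> b)"
proof -
  have "rank_plus (\<lambda>x y. s * mod_killing \<alpha> b0 x y) \<le> rank_plus (\<lambda>x y. s * mod_killing \<alpha> b x y)"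
    for s :: real
  proof (rule rank_plus_le_of_tendsto_pullbacks[OF F])
    show "bilinear (\<lambda>x y. s * mod_killing \<alpha> b x y)"
      by (rule bilinear_scale[OF bilinear_mod_killing[OF bl]])
    show "s * mod_killing \<alpha> b x y = s * mod_killing \<alpha> b y x" for x y
      by (subst mod_killing_commute) (rule refl)
    show "((\<lambda>t. s * mod_killing \<alpha> (conj_bracket (U t) b) x y) \<longlongrightarrow> s * mod_killing \<alpha> b0 x y) F" for x y
      by (intro tendsto_mult tendsto_const tendsto_mod_killing lim)
    show "eventually (\<lambda>t. \<exists>f. linear f \<and> inj f \<and> (\<lambda>x y. s * mod_killing \<alpha> (conj_bracket (U t) b) x y)
        = (\<lambda>x y. s * mod_killing \<alpha> b (f x) (f y))) F"
      using inv
      by eventually_elim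
        (auto simp: mod_killing_conj_bracket bl intro!: exI[of _ "(*v) (U _)"] inj_matrix_vector_mult)
  qed
  from this[of 1] this[of "-1"] show
    "rank_plus (mod_killing \<alpha> b0) \<le> rank_plus (mod_killing \<alpha> b)"
    "rank_minus (mod_killing \<alpha> b0) \<le> rank_minus (mod_killing \<alpha> b)"
    by (simp_all add: rank_minus_eq_rank_plus_uminus)
qed

theorem theorem1:
  fixes b b0 :: "real^'n \<Rightarrow> real^'n \<Rightarrow> real^'n"
  assumes "lie_bracket b"
    and "continuous_contraction b b0 \<or> sequential_contraction b b0"
    and "\<not> lie_isomorphic b0 b"
  shows "rank_plus (killing b0) \<le> rank_plus (killing b)
    \<and> rank_minus (killing b0) \<le> rank_minus (killing b)
    \<and> (\<forall>\<alpha>::real. rank_plus (mod_killing \<alpha> b0) \<le> rank_plus (mod_killing \<alpha> b)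
        \<and> rank_minus (mod_killing \<alpha> b0) \<le> rank_minus (mod_killing \<alpha> b))"
proof -
  have bl: "bilinear b" using assms(1) by (simp add: lie_bracket_def)
  have "rank_plus (mod_killing \<alpha> b0) \<le> rank_plus (mod_killing \<alpha> b)
      \<and> rank_minus (mod_killing \<alpha> b0) \<le> rank_minus (mod_killing \<alpha> b)" for \<alpha>
    using assms(2)
  proof
    assume "continuous_contraction b b0"
    then obtain U :: "real \<Rightarrow> real^'n^'n" where
      inv: "\<forall>\<epsilon>\<in>{0<..1}. invertible (U \<epsilon>)" and
      lim: "\<And>x y. ((\<lambda>\<epsilon>. conj_bracket (U \<epsilon>) b x y) \<longlongrightarrow> b0 x y) (at_right 0)"
      unfolding continuous_contraction_def conj_bracket_def by blast
    have "eventually (\<lambda>\<epsilon>. invertible (U \<epsilon>)) (at_right 0)"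
      unfolding eventually_at_right_field using inv by (intro exI[of _ 1]) auto
    then show ?thesis
      using mod_killing_ranks_le_of_tendsto_conj_bracket[OF _ bl _ lim] by simp
  next
    assume "sequential_contraction b b0"
    then obtain U :: "nat \<Rightarrow> real^'n^'n" where
      inv: "\<forall>p. invertible (U p)" and
      lim: "\<And>x y. (\<lambda>p. conj_bracket (U p) b x y) \<longlonglongrightarrow> b0 x y"
      unfolding sequential_contraction_def conj_bracket_def by blast
    show ?thesis
      using mod_killing_ranks_le_of_tendsto_conj_bracket[OF _ bl _ lim] inv by simp
  qed
  then show ?thesis unfolding killing_eq_mod_killing_0 by blast
qed

end
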